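(* Let $S$ be a $*$-regular semigroup, viewed as a DRC-semigroup with $D(a)=aa^\dagger$ and $R(a)=a^\dagger a$. Then for any $a\in S$: (i) $\vartheta_a$ and $\vartheta'_a$ are bijections, with $\vartheta_{a^\dagger}=\vartheta_a^{-1}$ and $\vartheta'_{a^\dagger}=(\vartheta'_a)^{-1}$; (ii) $\vartheta_{a^*}=\vartheta'_a$ and $\vartheta'_{a^*}=\vartheta_a$; (iii) $\Theta_{a^*}=\Delta_a$ and $\Delta_{a^*}=\Theta_a$.
   Context: A $*$-regular semigroup is a semigroup $S$ with an involution $a\mapsto a^*$ ($a^{**}=a$, $(ab)^*=b^*a^*$) such that each $a\in S$ has a (unique) element $a^\dagger$ (Moore–Penrose inverse) satisfying $aa^\dagger a=a$, $a^\dagger aa^\dagger=a^\dagger$, $(aa^\dagger)^*=aa^\dagger$, $(a^\dagger a)^*=a^\dagger a$. With $D(a)=aa^\dagger$, $R(a)=a^\dagger a$, $S$ is a DRC-semigroup. Let $P=\{D(a):a\in S\}$, ordered by $p\le q\iff p=pq=qp$, and $t^\downarrow=\{s\in P:s\le t\}$. For $a\in S$ define (maps written on the right) $\vartheta_a:D(a)^\downarrow\to R(a)^\downarrow$, $p\vartheta_a=R(pa)$; $\vartheta'_a:R(a)^\downarrow\to D(a)^\downarrow$, $q\vartheta'_a=D(aq)$; $\Theta_a,\Delta_a:P\to P$, $p\Theta_a=R(pa)$, $p\Delta_a=D(ap)$. *)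

theory Defs
  imports "HOL-Library.FuncSet"
begin

definition is_mp_inverse :: "('a::semigroup_mult \<Rightarrow> 'a) \<Rightarrow> 'a \<Rightarrow> 'a \<Rightarrow> bool" where
  "is_mp_inverse st a b \<longleftrightarrow> a * b * a = a \<and> b * a * b = b \<and>
     st (a * b) = a * b \<and> st (b * a) = b * a"

definition star_regular :: "('a::semigroup_mult \<Rightarrow> 'a) \<Rightarrow> bool" where
  "star_regular st \<longleftrightarrow> (\<forall>a. st (st a) = a) \<and> (\<forall>a b. st (a * b) = st b * st a)
     \<and> (\<forall>a. \<exists>b. is_mp_inverse st a b)"

text \<open>The Moore-Penrose inverse (unique in a star-regular semigroup).\<close>
definition mpinv :: "('a::semigroup_mult \<Rightarrow> 'a) \<Rightarrow> 'a \<Rightarrow> 'a" where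
  "mpinv st a = (THE b. is_mp_inverse st a b)"

definition Dop :: "('a::semigroup_mult \<Rightarrow> 'a) \<Rightarrow> 'a \<Rightarrow> 'a" where
  "Dop st a = a * mpinv st a"

definition Rop :: "('a::semigroup_mult \<Rightarrow> 'a) \<Rightarrow> 'a \<Rightarrow> 'a" where
  "Rop st a = mpinv st a * a"

definition projs :: "('a::semigroup_mult \<Rightarrow> 'a) \<Rightarrow> 'a set" where
  "projs st = {Dop st a | a. True}"

definition ple :: "'a::semigroup_mult \<Rightarrow> 'a \<Rightarrow> bool" where
  "ple p q \<longleftrightarrow> p = p * q \<and> p = q * p"

definition down :: "('a::semigroup_mult \<Rightarrow> 'a) \<Rightarrow> 'a \<Rightarrow> 'a set" where
  "down st t = {s \<in> projs st. ple s t}"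

definition vtheta :: "('a::semigroup_mult \<Rightarrow> 'a) \<Rightarrow> 'a \<Rightarrow> 'a \<Rightarrow> 'a" where
  "vtheta st a = restrict (\<lambda>p. Rop st (p * a)) (down st (Dop st a))"

definition vtheta' :: "('a::semigroup_mult \<Rightarrow> 'a) \<Rightarrow> 'a \<Rightarrow> 'a \<Rightarrow> 'a" where
  "vtheta' st a = restrict (\<lambda>q. Dop st (a * q)) (down st (Rop st a))"

definition Theta :: "('a::semigroup_mult \<Rightarrow> 'a) \<Rightarrow> 'a \<Rightarrow> 'a \<Rightarrow> 'a" where
  "Theta st a = restrict (\<lambda>p. Rop st (p * a)) (projs st)"

definition Delta :: "('a::semigroup_mult \<Rightarrow> 'a) \<Rightarrow> 'a \<Rightarrow> 'a \<Rightarrow> 'a" where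
  "Delta st a = restrict (\<lambda>p. Dop st (a * p)) (projs st)"

end

theory Submission
  imports Defs
begin

text \<open>Every projection \<open>p \<le> D(a)\<close> satisfies \<open>D(pa) = p\<close> and \<open>(pa)\<^sup>\<dagger> = R(pa) a\<^sup>\<dagger>\<close>; hence
  \<open>\<vartheta>\<^bsub>a\<^sup>\<dagger>\<^esub>(\<vartheta>\<^sub>a p) = R((pa)\<^sup>\<dagger>) = D(pa) = p\<close>, and since \<open>a\<^sup>\<dagger>\<^sup>\<dagger> = a\<close> the maps \<open>\<vartheta>\<^sub>a\<close> and \<open>\<vartheta>\<^bsub>a\<^sup>\<dagger>\<^esub>\<close>
  are mutually inverse. Projections are fixed by the involution, so \<open>(pa)\<^sup>* = a\<^sup>* p\<close> and
  \<open>R(x\<^sup>*) = D(x)\<close> turn every statement about \<open>\<vartheta>, \<Theta>\<close> into the dual one about \<open>\<vartheta>', \<Delta>\<close>.\<close>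

lemma bij_betw_restrict_the_inv_into:
  assumes "f ` A \<subseteq> B" and "g ` B \<subseteq> A"
    and "\<And>x. x \<in> A \<Longrightarrow> g (f x) = x" and "\<And>y. y \<in> B \<Longrightarrow> f (g y) = y"
    and "g \<in> extensional B"
  shows "bij_betw f A B \<and> g = restrict (the_inv_into A f) B"
proof
  show bij: "bij_betw f A B"
    using assms by (intro bij_betw_byWitness[where f' = g]) auto
  show "g = restrict (the_inv_into A f) B"
  proof (rule extensionalityI[OF \<open>g \<in> extensional B\<close> restrict_extensional])
    fix y assume "y \<in> B"
    then show "g y = restrict (the_inv_into A f) B y"
      using assms bij by (auto simp: bij_betw_def intro: the_inv_into_f_eq[symmetric])
  qed
qed

context
  fixes st :: "'a::semigroup_mult \<Rightarrow> 'a"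
  assumes sr: "star_regular st"
begin

lemma star_mult: "st (x * y) = st y * st x"
  using sr by (simp add: star_regular_def)

lemma is_mp_inverse_unique:
  assumes b: "is_mp_inverse st a b" and c: "is_mp_inverse st a c"
  shows "b = c"
proof -
  from b have b1: "a * b * a = a" and b2: "b * a * b = b"
    and b3: "st (a * b) = a * b" and b4: "st (b * a) = b * a"
    by (auto simp: is_mp_inverse_def)
  from c have c1: "a * c * a = a" and c2: "c * a * c = c"
    and c3: "st (a * c) = a * c" and c4: "st (c * a) = c * a"
    by (auto simp: is_mp_inverse_def)
  have "b = b * st (a * b)" using b2 b3 by (simp add: mult.assoc)
  also have "\<dots> = b * st b * st (a * c * a)" using c1 by (simp add: star_mult mult.assoc)
  also have "\<dots> = b * st (a * b) * st (a * c)" by (simp add: star_mult mult.assoc)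
  also have "\<dots> = b * a * c" using b2 b3 c3 by (simp add: mult.assoc)
  finally have bac: "b = b * a * c" .
  have "c = st (c * a) * c" using c2 c4 by (simp add: mult.assoc)
  also have "\<dots> = st (a * b * a) * st c * c" using b1 by (simp add: star_mult mult.assoc)
  also have "\<dots> = st (b * a) * st (c * a) * c" by (simp add: star_mult mult.assoc)
  also have "\<dots> = b * a * c" using c2 b4 c4 by (simp add: mult.assoc)
  finally show ?thesis using bac by simp
qed

lemma is_mp_inverse_mpinv: "is_mp_inverse st a (mpinv st a)"
  unfolding mpinv_def
  by (rule theI') (use sr is_mp_inverse_unique in \<open>auto simp: star_regular_def\<close>)

lemma mpinv_eqI: "is_mp_inverse st a b \<Longrightarrow> mpinv st a = b"
  using is_mp_inverse_mpinv is_mp_inverse_unique by blast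

lemma mult_mpinv_mult: "a * mpinv st a * a = a"
  and mpinv_mult_mpinv: "mpinv st a * a * mpinv st a = mpinv st a"
  and star_Dop: "st (Dop st a) = Dop st a"
  and star_Rop: "st (Rop st a) = Rop st a"
  using is_mp_inverse_mpinv[of a] by (auto simp: is_mp_inverse_def Dop_def Rop_def)

lemma mpinv_mpinv: "mpinv st (mpinv st a) = a"
  by (rule mpinv_eqI)
    (use is_mp_inverse_mpinv[of a] in \<open>auto simp: is_mp_inverse_def\<close>)

lemma mpinv_star: "mpinv st (st a) = st (mpinv st a)"
proof (rule mpinv_eqI)
  let ?b = "mpinv st a"
  have "st a * st ?b * st a = st a" and "st ?b * st a * st ?b = st ?b"
    by (metis star_mult mult_mpinv_mult mpinv_mult_mpinv mult.assoc)+
  moreover have "st (st a * st ?b) = st a * st ?b" and "st (st ?b * st a) = st ?b * st a"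
    using star_Dop[of a] star_Rop[of a] by (simp_all add: Dop_def Rop_def star_mult)
  ultimately show "is_mp_inverse st (st a) (st ?b)"
    by (simp add: is_mp_inverse_def)
qed

lemma Dop_star: "Dop st (st a) = Rop st a"
  and Rop_star: "Rop st (st a) = Dop st a"
  using star_Dop[of a] star_Rop[of a]
  by (simp_all add: Dop_def Rop_def mpinv_star star_mult[symmetric])

lemma Dop_mpinv: "Dop st (mpinv st a) = Rop st a"
  and Rop_mpinv: "Rop st (mpinv st a) = Dop st a"
  by (simp_all add: Dop_def Rop_def mpinv_mpinv)

lemma star_proj: "p \<in> projs st \<Longrightarrow> st p = p"
  by (auto simp: projs_def star_Dop)

lemma proj_idem: "p \<in> projs st \<Longrightarrow> p * p = p"
  by (auto simp: projs_def Dop_def) (metis mult_mpinv_mult mult.assoc)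

lemma Rop_in_projs: "Rop st a \<in> projs st"
  unfolding projs_def by (metis (mono_tags) Dop_mpinv mem_Collect_eq)

lemma Dop_mult_below:
  assumes p: "p \<in> projs st" and le: "ple p (Dop st a)"
  shows "Dop st (p * a) = p"
proof -
  let ?x = "p * a"
  have xa: "?x * mpinv st a = p"
    using le by (simp add: ple_def Dop_def mult.assoc)
  have "Dop st ?x * p = p"
    using mult_mpinv_mult[of ?x] xa by (metis Dop_def mult.assoc)
  then have "p * Dop st ?x = p"
    using star_mult[of "Dop st ?x" p] star_proj[OF p] star_Dop by simp
  moreover have "p * Dop st ?x = Dop st ?x"
    using proj_idem[OF p] by (simp add: Dop_def mult.assoc[symmetric])
  ultimately show ?thesis by simp
qed

lemma Rop_mult_mpinv:
  assumes p: "p \<in> projs st" and le: "ple p (Dop st a)"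
  shows "Rop st (p * a) * mpinv st a = mpinv st (p * a)"
proof -
  let ?x = "p * a"
  have "Rop st ?x * mpinv st a = mpinv st ?x * p"
    using le by (simp add: Rop_def ple_def Dop_def mult.assoc)
  also have "\<dots> = mpinv st ?x"
    using Dop_mult_below[OF assms] mpinv_mult_mpinv[of ?x] by (simp add: Dop_def mult.assoc)
  finally show ?thesis .
qed

lemma ple_Rop_mult: "ple (Rop st (p * a)) (Rop st a)"
proof -
  have right: "Rop st (p * a) * Rop st a = Rop st (p * a)"
    using mult_mpinv_mult[of a] by (simp add: Rop_def mult.assoc)
  then have "Rop st a * Rop st (p * a) = Rop st (p * a)"
    using star_mult[of "Rop st (p * a)" "Rop st a"] by (simp add: star_Rop)
  with right show ?thesis by (simp add: ple_def)
qed

lemma vtheta_in_down: "p \<in> down st (Dop st a) \<Longrightarrow> vtheta st a p \<in> down st (Rop st a)"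
  by (simp add: vtheta_def down_def Rop_in_projs ple_Rop_mult)

lemma vtheta_mpinv_vtheta:
  assumes "p \<in> down st (Dop st a)"
  shows "vtheta st (mpinv st a) (vtheta st a p) = p"
proof -
  have "vtheta st (mpinv st a) (vtheta st a p) = Rop st (Rop st (p * a) * mpinv st a)"
    using assms vtheta_in_down[OF assms] by (simp add: vtheta_def Dop_mpinv)
  also have "\<dots> = p"
    using assms by (simp add: down_def Rop_mult_mpinv Rop_mpinv Dop_mult_below)
  finally show ?thesis .
qed

lemma bij_betw_vtheta_and_vtheta_mpinv:
  "bij_betw (vtheta st a) (down st (Dop st a)) (down st (Rop st a))
   \<and> vtheta st (mpinv st a) =
       restrict (the_inv_into (down st (Dop st a)) (vtheta st a)) (down st (Rop st a))"
proof (rule bij_betw_restrict_the_inv_into)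
  show "vtheta st a ` down st (Dop st a) \<subseteq> down st (Rop st a)"
    using vtheta_in_down by blast
  show "vtheta st (mpinv st a) ` down st (Rop st a) \<subseteq> down st (Dop st a)"
    using vtheta_in_down[of _ "mpinv st a"] by (auto simp: Dop_mpinv Rop_mpinv)
  show "vtheta st (mpinv st a) (vtheta st a p) = p" if "p \<in> down st (Dop st a)" for p
    using that by (rule vtheta_mpinv_vtheta)
  show "vtheta st a (vtheta st (mpinv st a) q) = q" if "q \<in> down st (Rop st a)" for q
    using that vtheta_mpinv_vtheta[of q "mpinv st a"] by (simp add: Dop_mpinv mpinv_mpinv)
  show "vtheta st (mpinv st a) \<in> extensional (down st (Rop st a))"
    by (simp add: vtheta_def Dop_mpinv)
qed

lemma Rop_mult_star: "p \<in> projs st \<Longrightarrow> Rop st (p * st a) = Dop st (a * p)"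
  using Rop_star[of "a * p"] by (simp add: star_mult star_proj)

lemma Dop_star_mult: "p \<in> projs st \<Longrightarrow> Dop st (st a * p) = Rop st (p * a)"
  using Dop_star[of "p * a"] by (simp add: star_mult star_proj)

lemma vtheta_star: "vtheta st (st a) = vtheta' st a"
  unfolding vtheta_def vtheta'_def Dop_star
  by (rule restrict_ext) (simp add: down_def Rop_mult_star)

lemma vtheta'_star: "vtheta' st (st a) = vtheta st a"
  unfolding vtheta_def vtheta'_def Rop_star
  by (rule restrict_ext) (simp add: down_def Dop_star_mult)

lemma Theta_star: "Theta st (st a) = Delta st a"
  unfolding Theta_def Delta_def by (rule restrict_ext) (simp add: Rop_mult_star)

lemma Delta_star: "Delta st (st a) = Theta st a"
  unfolding Theta_def Delta_def by (rule restrict_ext) (simp add: Dop_star_mult)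

lemma bij_betw_vtheta'_and_vtheta'_mpinv:
  "bij_betw (vtheta' st a) (down st (Rop st a)) (down st (Dop st a))
   \<and> vtheta' st (mpinv st a) =
       restrict (the_inv_into (down st (Rop st a)) (vtheta' st a)) (down st (Dop st a))"
  using bij_betw_vtheta_and_vtheta_mpinv[of "st a"]
  by (simp add: Dop_star Rop_star mpinv_star vtheta_star)

end

theorem proposition9p12:
  fixes st :: "'a::semigroup_mult \<Rightarrow> 'a" and a :: 'a
  assumes "star_regular st"
  shows "bij_betw (vtheta st a) (down st (Dop st a)) (down st (Rop st a))
       \<and> bij_betw (vtheta' st a) (down st (Rop st a)) (down st (Dop st a))
       \<and> vtheta st (mpinv st a) =
           restrict (the_inv_into (down st (Dop st a)) (vtheta st a)) (down st (Rop st a))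
       \<and> vtheta' st (mpinv st a) =
           restrict (the_inv_into (down st (Rop st a)) (vtheta' st a)) (down st (Dop st a))
       \<and> vtheta st (st a) = vtheta' st a
       \<and> vtheta' st (st a) = vtheta st a
       \<and> Theta st (st a) = Delta st a
       \<and> Delta st (st a) = Theta st a"
  using bij_betw_vtheta_and_vtheta_mpinv[OF assms, of a]
    bij_betw_vtheta'_and_vtheta'_mpinv[OF assms, of a]
    vtheta_star[OF assms] vtheta'_star[OF assms] Theta_star[OF assms] Delta_star[OF assms]
  by blast

end
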